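(* (Young's inequality for an exponential density.) Let $1<p<2$, let $p'$ be defined by $\frac1p+\frac1{p'}=1$, and let $\varphi(x)=e^{-|x|}$ on $\mathbb R$. Set \[ A_p=\left(\frac{p'}{2}\right)^{2/p}\left[\frac{\Gamma\!\left(\frac{2p}{2-p}\right)}{\Gamma\!\left(\frac{2}{2-p}\right)\Gamma\!\left(\frac{p}{2-p}\right)}\right]^{\frac{2}{p}-1}. \] Then for every $f\in L^p(\mathbb R)$, \[ \|\varphi*f\|_{L^{p'}(\mathbb R)}\le A_p\,\|f\|_{L^p(\mathbb R)} . \]
   Context: Here $\varphi*f(x)=\int_{\mathbb R}\varphi(x-y)f(y)\,dy$ denotes convolution on $\mathbb R$. *)

theory Defs
  imports "HOL-Analysis.Analysis"
begin

definition Lp_norm :: "real \<Rightarrow> (real \<Rightarrow> real) \<Rightarrow> real" where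
  "Lp_norm q g = (LINT x|lborel. \<bar>g x\<bar> powr q) powr (1 / q)"

definition in_Lp :: "real \<Rightarrow> (real \<Rightarrow> real) \<Rightarrow> bool" where
  "in_Lp q g \<longleftrightarrow> g \<in> borel_measurable lborel \<and> integrable lborel (\<lambda>x. \<bar>g x\<bar> powr q)"

definition conv :: "(real \<Rightarrow> real) \<Rightarrow> (real \<Rightarrow> real) \<Rightarrow> real \<Rightarrow> real" where
  "conv \<phi> f x = (LINT y|lborel. \<phi> (x - y) * f y)"

definition conj_exp :: "real \<Rightarrow> real" where
  "conj_exp p = p / (p - 1)"

definition A_const :: "real \<Rightarrow> real" where
  "A_const p = (conj_exp p / 2) powr (2 / p) *
     (Gamma (2 * p / (2 - p)) / (Gamma (2 / (2 - p)) * Gamma (p / (2 - p)))) powr (2 / p - 1)"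

end

theory Submission
  imports Defs "HOL-Probability.Distributions"
begin

text \<open>
  H\<ouml>lder's inequality against the weight \<open>\<phi>(x - \<cdot>)\<close> gives
  \<open>|\<phi> * f| \<le> \<parallel>\<phi>\<parallel>\<^sub>1\<^bsup>1/q\<^esup> (\<phi> * |f|\<^sup>p)\<^bsup>1/p\<^esup>\<close>. For a kernel \<open>0 \<le> \<phi> \<le> 1\<close> this bounds
  \<open>\<phi> * f\<close> uniformly by \<open>\<parallel>\<phi>\<parallel>\<^sub>1\<^bsup>1/q\<^esup> \<parallel>f\<parallel>\<^sub>p\<close> and, after Tonelli, in \<open>L\<^sup>p\<close> by
  \<open>\<parallel>\<phi>\<parallel>\<^sub>1 \<parallel>f\<parallel>\<^sub>p\<close>; since \<open>p \<le> q\<close>, interpolating the two bounds yields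
  \<open>\<parallel>\<phi> * f\<parallel>\<^sub>q \<le> \<parallel>\<phi>\<parallel>\<^sub>1\<^bsup>2/q\<^esup> \<parallel>f\<parallel>\<^sub>p\<close>. For \<open>\<phi>(x) = exp (-|x|)\<close>, with \<open>\<parallel>\<phi>\<parallel>\<^sub>1 = 2\<close>,
  this is the constant \<open>4\<^bsup>1/q\<^esup>\<close>.
  Writing \<open>b = p/(2 - p)\<close>, the Gamma quotient in \<open>A\<^sub>p\<close> is \<open>1/(b B(b,b))\<close>, and the bound
  \<open>B(b,b) \<le> 4\<^bsup>1-b\<^esup>\<close> (from \<open>t(1 - t) \<le> 1/4\<close>) together with elementary logarithm
  estimates shows \<open>4\<^bsup>1/q\<^esup> \<le> A\<^sub>p\<close>.
\<close>

lemma conjugate_exponent_gt_1: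
  fixes p q :: real
  assumes "1 < p" "1/p + 1/q = 1"
  shows "1 < q"
proof -
  have "1/q = 1 - 1/p" using assms(2) by linarith
  moreover have "0 < 1/p" "1/p < 1" using assms(1) by auto
  ultimately have "0 < 1/q" "1/q < 1" by auto
  then show ?thesis by (simp add: divide_less_eq_1 zero_less_divide_1_iff)
qed

lemma Holder_inequality_nonneg:
  fixes a b :: "'a \<Rightarrow> real"
  assumes pq: "1 < p" "1 < q" "1/p + 1/q = 1"
    and [measurable]: "a \<in> borel_measurable M" "b \<in> borel_measurable M"
    and a_nonneg: "\<And>x. 0 \<le> a x" and b_nonneg: "\<And>x. 0 \<le> b x"
    and int_a: "integrable M (\<lambda>x. a x powr p)" and int_b: "integrable M (\<lambda>x. b x powr q)"
  shows "integrable M (\<lambda>x. a x * b x)"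
    and "(\<integral>x. a x * b x \<partial>M) \<le> (\<integral>x. a x powr p \<partial>M) powr (1/p) * (\<integral>x. b x powr q \<partial>M) powr (1/q)"
proof -
  have Young: "u * v \<le> u powr p / p + v powr q / q" if "0 \<le> u" "0 \<le> v" for u v
    using Youngs_inequality pq that by blast
  show int_ab: "integrable M (\<lambda>x. a x * b x)"
  proof (rule Bochner_Integration.integrable_bound)
    show "integrable M (\<lambda>x. a x powr p / p + b x powr q / q)" using int_a int_b by auto
    show "AE x in M. norm (a x * b x) \<le> norm (a x powr p / p + b x powr q / q)"
      using Young a_nonneg b_nonneg pq by (auto intro!: AE_I2 simp: abs_mult)
  qed auto
  define A where "A = (\<integral>x. a x powr p \<partial>M)"
  define B where "B = (\<integral>x. b x powr q \<partial>M)"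
  have "0 \<le> A" "0 \<le> B" unfolding A_def B_def by (auto intro!: integral_nonneg_AE)
  show "(\<integral>x. a x * b x \<partial>M) \<le> A powr (1/p) * B powr (1/q)"
  proof (cases "A = 0 \<or> B = 0")
    case True
    then have "(AE x in M. a x powr p = 0) \<or> (AE x in M. b x powr q = 0)"
      using integral_nonneg_eq_0_iff_AE[OF int_a] integral_nonneg_eq_0_iff_AE[OF int_b]
      by (auto simp: A_def B_def)
    then have "AE x in M. a x * b x = 0"
    proof
      assume "AE x in M. a x powr p = 0"
      then show ?thesis by eventually_elim auto
    next
      assume "AE x in M. b x powr q = 0"
      then show ?thesis by eventually_elim auto
    qed
    then show ?thesis
      using \<open>0 \<le> A\<close> \<open>0 \<le> B\<close> by (simp add: integral_eq_zero_AE)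
  next
    case False
    with \<open>0 \<le> A\<close> \<open>0 \<le> B\<close> have "0 < A" "0 < B" by auto
    define \<alpha> where "\<alpha> = A powr (1/p)"
    define \<beta> where "\<beta> = B powr (1/q)"
    have "0 < \<alpha>" "0 < \<beta>" using \<open>0 < A\<close> \<open>0 < B\<close> by (auto simp: \<alpha>_def \<beta>_def)
    have "\<alpha> powr p = A" "\<beta> powr q = B"
      using \<open>0 < A\<close> \<open>0 < B\<close> pq by (simp_all add: \<alpha>_def \<beta>_def powr_powr)
    have pointwise: "a x * b x / (\<alpha> * \<beta>) \<le> a x powr p / (p * A) + b x powr q / (q * B)" for x
    proof -
      have "a x * b x / (\<alpha> * \<beta>) = (a x / \<alpha>) * (b x / \<beta>)" by simp
      also have "\<dots> \<le> (a x / \<alpha>) powr p / p + (b x / \<beta>) powr q / q"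
        using a_nonneg b_nonneg \<open>0 < \<alpha>\<close> \<open>0 < \<beta>\<close> by (intro Young) auto
      also have "\<dots> = a x powr p / (p * A) + b x powr q / (q * B)"
        using a_nonneg b_nonneg \<open>0 < \<alpha>\<close> \<open>0 < \<beta>\<close> \<open>\<alpha> powr p = A\<close> \<open>\<beta> powr q = B\<close>
        by (simp add: powr_divide mult.commute)
      finally show ?thesis .
    qed
    have "(\<integral>x. a x * b x / (\<alpha> * \<beta>) \<partial>M) \<le> (\<integral>x. a x powr p / (p * A) + b x powr q / (q * B) \<partial>M)"
      using int_ab int_a int_b pointwise by (intro integral_mono) auto
    also have "\<dots> = 1"
      using int_a int_b \<open>0 < A\<close> \<open>0 < B\<close> pq by (simp add: A_def B_def)
    finally show ?thesis
      using \<open>0 < \<alpha>\<close> \<open>0 < \<beta>\<close> by (simp add: \<alpha>_def \<beta>_def divide_le_eq)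
  qed
qed

lemma weighted_Holder_inequality:
  fixes w u :: "'a \<Rightarrow> real"
  assumes pq: "1 < p" "1/p + 1/q = 1"
    and [measurable]: "w \<in> borel_measurable M" "u \<in> borel_measurable M"
    and w_nonneg: "\<And>x. 0 \<le> w x" and u_nonneg: "\<And>x. 0 \<le> u x"
    and int_w: "integrable M w" and int_wu: "integrable M (\<lambda>x. w x * u x powr p)"
  shows "integrable M (\<lambda>x. w x * u x)"
    and "(\<integral>x. w x * u x \<partial>M) \<le> (\<integral>x. w x \<partial>M) powr (1/q) * (\<integral>x. w x * u x powr p \<partial>M) powr (1/p)"
proof -
  have "1 < q" using conjugate_exponent_gt_1 pq .
  have split: "w x * u x = w x powr (1/q) * (w x powr (1/p) * u x)" for x
    using pq w_nonneg[of x] by (simp add: mult.assoc powr_add[symmetric] add.commute)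
  have powers: "(w x powr (1/q)) powr q = w x" "(w x powr (1/p) * u x) powr p = w x * u x powr p" for x
    using pq \<open>1 < q\<close> w_nonneg[of x] u_nonneg[of x] by (simp_all add: powr_powr powr_mult)
  note Holder = Holder_inequality_nonneg[of q p "\<lambda>x. w x powr (1/q)" M "\<lambda>x. w x powr (1/p) * u x"]
  show "integrable M (\<lambda>x. w x * u x)"
    using Holder(1) pq \<open>1 < q\<close> int_w int_wu u_nonneg by (simp add: split powers add.commute)
  show "(\<integral>x. w x * u x \<partial>M) \<le> (\<integral>x. w x \<partial>M) powr (1/q) * (\<integral>x. w x * u x powr p \<partial>M) powr (1/p)"
    using Holder(2) pq \<open>1 < q\<close> int_w int_wu u_nonneg by (simp add: split powers add.commute)
qed

lemma integrable_lborel_reflect_shift: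
  fixes f :: "real \<Rightarrow> real"
  assumes "integrable lborel f"
  shows "integrable lborel (\<lambda>y. f (x - y))"
  using lborel_integrable_real_affine[OF assms, of "-1" x] by simp

lemma integral_lborel_reflect_shift:
  fixes f :: "real \<Rightarrow> real"
  shows "(LINT y|lborel. f (x - y)) = (LINT y|lborel. f y)"
  using lborel_integral_real_affine[of "-1" f x] by simp

lemma nn_integral_lborel_reflect_shift:
  fixes f :: "real \<Rightarrow> ennreal"
  assumes "f \<in> borel_measurable borel"
  shows "(\<integral>\<^sup>+y. f (x - y) \<partial>lborel) = (\<integral>\<^sup>+y. f y \<partial>lborel)"
  using nn_integral_real_affine[OF assms, of "-1" x] by simp

lemma nn_integral_exp_neg_abs_le: "(\<integral>\<^sup>+x. ennreal (exp (- \<bar>x::real\<bar>)) \<partial>lborel) \<le> 2"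
proof -
  let ?e = "\<lambda>x::real. ennreal (exp (- x)) * indicator {0..} x"
  have half: "(\<integral>\<^sup>+x. ?e x \<partial>lborel) = 1"
    using nn_intergal_power_times_exp_Ici[of 0] by simp
  have "(\<integral>\<^sup>+x. ennreal (exp (- \<bar>x\<bar>)) \<partial>lborel) \<le> (\<integral>\<^sup>+x. ?e x + ?e (0 - x) \<partial>lborel)"
    by (intro nn_integral_mono) (auto simp: indicator_def)
  also have "\<dots> = (\<integral>\<^sup>+x. ?e x \<partial>lborel) + (\<integral>\<^sup>+x. ?e (0 - x) \<partial>lborel)"
    by (intro nn_integral_add) auto
  also have "\<dots> = 2"
    using half nn_integral_lborel_reflect_shift[of ?e 0] by simp
  finally show ?thesis .
qed

lemma integrable_exp_neg_abs: "integrable lborel (\<lambda>x::real. exp (- \<bar>x\<bar>))"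
  using nn_integral_exp_neg_abs_le
  by (intro integrableI_nonneg) (auto simp: ennreal_less_top order.strict_trans1)

lemma integral_exp_neg_abs_le: "(LINT x|lborel. exp (- \<bar>x::real\<bar>)) \<le> 2"
proof -
  have "ennreal (LINT x|lborel. exp (- \<bar>x\<bar>)) = (\<integral>\<^sup>+x. ennreal (exp (- \<bar>x\<bar>)) \<partial>lborel)"
    using integrable_exp_neg_abs by (intro nn_integral_eq_integral[symmetric]) auto
  then show ?thesis
    using nn_integral_exp_neg_abs_le by (metis ennreal_le_iff ennreal_numeral zero_le_numeral)
qed

lemma borel_measurable_conv [measurable]:
  assumes [measurable]: "\<phi> \<in> borel_measurable borel" "g \<in> borel_measurable borel"
  shows "conv \<phi> g \<in> borel_measurable lborel"
proof -
  have "(\<lambda>(x, y). \<phi> (x - y) * g y) \<in> borel_measurable (lborel \<Otimes>\<^sub>M lborel)"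
    by measurable
  then show ?thesis
    unfolding conv_def[abs_def] by (rule lborel.borel_measurable_lebesgue_integral)
qed

lemma powr_interpolation_identity:
  fixes K N p q :: real
  assumes "0 \<le> K" "0 \<le> N" "0 < q"
  shows "(K powr (1/q) * N) powr (q - p) * K powr (p/q) * (K * N powr p) = (K powr (2/q) * N) powr q"
proof -
  have "(q - p)/q + p/q + 1 = 2"
    using assms(3) by (simp add: field_simps)
  have "(K powr (1/q) * N) powr (q - p) * K powr (p/q) * (K * N powr p)
      = (K powr ((q - p)/q) * K powr (p/q) * K powr 1) * (N powr (q - p) * N powr p)"
    using assms by (simp add: powr_mult powr_powr mult_ac)
  also have "\<dots> = K powr 2 * N powr q"
    unfolding powr_add[symmetric] \<open>(q - p)/q + p/q + 1 = 2\<close> by simp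
  also have "\<dots> = (K powr (2/q) * N) powr q"
    using assms by (simp add: powr_mult powr_powr)
  finally show ?thesis .
qed

locale unit_kernel_Lp =
  fixes \<phi> f :: "real \<Rightarrow> real" and p q :: real
  assumes kernel_measurable [measurable]: "\<phi> \<in> borel_measurable borel"
    and kernel_nonneg: "\<And>x. 0 \<le> \<phi> x"
    and kernel_le_1: "\<And>x. \<phi> x \<le> 1"
    and kernel_integrable: "integrable lborel \<phi>"
    and exponent: "1 < p"
    and conjugate: "1/p + 1/q = 1"
    and f_Lp: "in_Lp p f"
begin

abbreviation mass :: real where
  "mass \<equiv> LINT x|lborel. \<phi> x"

lemma f_measurable [measurable]: "f \<in> borel_measurable borel"
  and integrable_f_powr: "integrable lborel (\<lambda>y. \<bar>f y\<bar> powr p)"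
  using f_Lp by (auto simp: in_Lp_def)

lemma Lp_norm_f_powr: "Lp_norm p f powr p = (LINT y|lborel. \<bar>f y\<bar> powr p)"
  using exponent by (simp add: Lp_norm_def powr_powr integral_nonneg_AE)

lemma mass_nonneg: "0 \<le> mass"
  using kernel_nonneg by (simp add: integral_nonneg_AE)

lemma integrable_kernel_mult_powr: "integrable lborel (\<lambda>y. \<phi> (x - y) * \<bar>f y\<bar> powr p)"
proof (rule Bochner_Integration.integrable_bound[OF integrable_f_powr])
  show "AE y in lborel. norm (\<phi> (x - y) * \<bar>f y\<bar> powr p) \<le> norm (\<bar>f y\<bar> powr p)"
    using kernel_nonneg kernel_le_1 by (auto intro!: AE_I2 mult_left_le_one_le simp: abs_mult)
qed simp

lemma conv_powr_le: "conv \<phi> (\<lambda>y. \<bar>f y\<bar> powr p) x \<le> Lp_norm p f powr p"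
  unfolding conv_def Lp_norm_f_powr
  using integrable_kernel_mult_powr integrable_f_powr kernel_nonneg kernel_le_1
  by (intro integral_mono) (auto intro: mult_left_le_one_le)

lemma conv_powr_nonneg: "0 \<le> conv \<phi> (\<lambda>y. \<bar>f y\<bar> powr p) x"
  unfolding conv_def using kernel_nonneg by (simp add: integral_nonneg_AE)

lemma abs_conv_le_Holder:
  "\<bar>conv \<phi> f x\<bar> \<le> mass powr (1/q) * conv \<phi> (\<lambda>y. \<bar>f y\<bar> powr p) x powr (1/p)"
proof -
  note Holder = weighted_Holder_inequality[OF exponent conjugate, of "\<lambda>y. \<phi> (x - y)" lborel "\<lambda>y. \<bar>f y\<bar>"]
  have "integrable lborel (\<lambda>y. \<phi> (x - y))"
    using kernel_integrable by (rule integrable_lborel_reflect_shift)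
  then have "\<bar>conv \<phi> f x\<bar> \<le> (LINT y|lborel. \<phi> (x - y) * \<bar>f y\<bar>)"
    unfolding conv_def using Holder(1) kernel_nonneg integrable_kernel_mult_powr
    by (auto intro: integral_abs_bound[THEN order.trans] simp: abs_mult)
  also have "\<dots> \<le> mass powr (1/q) * conv \<phi> (\<lambda>y. \<bar>f y\<bar> powr p) x powr (1/p)"
    using Holder(2) \<open>integrable lborel (\<lambda>y. \<phi> (x - y))\<close> kernel_nonneg integrable_kernel_mult_powr
    by (simp add: conv_def integral_lborel_reflect_shift)
  finally show ?thesis .
qed

lemma abs_conv_le: "\<bar>conv \<phi> f x\<bar> \<le> mass powr (1/q) * Lp_norm p f"
proof -
  have "conv \<phi> (\<lambda>y. \<bar>f y\<bar> powr p) x powr (1/p) \<le> (Lp_norm p f powr p) powr (1/p)"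
    using conv_powr_le conv_powr_nonneg exponent by (intro powr_mono2) auto
  also have "\<dots> = Lp_norm p f"
    using exponent by (simp add: powr_powr Lp_norm_def)
  finally show ?thesis
    using abs_conv_le_Holder[of x] by (meson mult_left_mono powr_ge_zero order_trans)
qed

lemma nn_integral_conv_powr:
  "(\<integral>\<^sup>+x. ennreal (conv \<phi> (\<lambda>y. \<bar>f y\<bar> powr p) x) \<partial>lborel)
     = ennreal (mass * (LINT y|lborel. \<bar>f y\<bar> powr p))"
proof -
  have "(\<integral>\<^sup>+x. ennreal (conv \<phi> (\<lambda>y. \<bar>f y\<bar> powr p) x) \<partial>lborel)
      = (\<integral>\<^sup>+x. (\<integral>\<^sup>+y. ennreal (\<phi> (x - y) * \<bar>f y\<bar> powr p) \<partial>lborel) \<partial>lborel)"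
    unfolding conv_def using integrable_kernel_mult_powr kernel_nonneg
    by (intro nn_integral_cong nn_integral_eq_integral[symmetric]) auto
  also have "\<dots> = (\<integral>\<^sup>+y. (\<integral>\<^sup>+x. ennreal (\<phi> (x - y) * \<bar>f y\<bar> powr p) \<partial>lborel) \<partial>lborel)"
    by (rule lborel_pair.Fubini'[symmetric]) measurable
  also have "\<dots> = (\<integral>\<^sup>+y. (\<integral>\<^sup>+x. ennreal (\<phi> (x - y)) \<partial>lborel) * ennreal (\<bar>f y\<bar> powr p) \<partial>lborel)"
    using kernel_nonneg by (simp add: ennreal_mult nn_integral_multc)
  also have "\<dots> = (\<integral>\<^sup>+y. ennreal mass * ennreal (\<bar>f y\<bar> powr p) \<partial>lborel)"
  proof -
    have "(\<integral>\<^sup>+x. ennreal (\<phi> (x - y)) \<partial>lborel) = ennreal mass" for y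
      using nn_integral_real_affine[of "\<lambda>x. ennreal (\<phi> x)" 1 "- y"]
            nn_integral_eq_integral[OF kernel_integrable] kernel_nonneg
      by simp
    then show ?thesis by simp
  qed
  also have "\<dots> = ennreal (mass * (LINT y|lborel. \<bar>f y\<bar> powr p))"
    using integrable_f_powr mass_nonneg
    by (simp add: nn_integral_cmult nn_integral_eq_integral ennreal_mult)
  finally show ?thesis .
qed

lemma integrable_conv_powr: "integrable lborel (conv \<phi> (\<lambda>y. \<bar>f y\<bar> powr p))"
  using nn_integral_conv_powr conv_powr_nonneg
  by (intro integrableI_nonneg) auto

lemma integral_conv_powr:
  "(LINT x|lborel. conv \<phi> (\<lambda>y. \<bar>f y\<bar> powr p) x) = mass * (LINT y|lborel. \<bar>f y\<bar> powr p)"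
  using nn_integral_conv_powr nn_integral_eq_integral[OF integrable_conv_powr] conv_powr_nonneg
    mass_nonneg integrable_f_powr
  by (simp add: integral_nonneg_AE)

lemma Lp_norm_conv_le:
  assumes "p \<le> q"
  shows "in_Lp q (conv \<phi> f) \<and> Lp_norm q (conv \<phi> f) \<le> mass powr (2/q) * Lp_norm p f"
proof -
  define N where "N = Lp_norm p f"
  define H where "H = conv \<phi> (\<lambda>y. \<bar>f y\<bar> powr p)"
  define C where "C = (mass powr (1/q) * N) powr (q - p) * mass powr (p/q)"
  have "0 \<le> N" by (simp add: N_def Lp_norm_def)
  have "1 < q" using exponent conjugate by (rule conjugate_exponent_gt_1)
  \<comment> \<open>Split \<open>|\<phi> * f|\<^sup>q = |\<phi> * f|\<^bsup>q-p\<^esup> |\<phi> * f|\<^sup>p\<close>: bound the first factor uniformly, the second by \<open>H\<close>.\<close>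
  have pointwise: "\<bar>conv \<phi> f x\<bar> powr q \<le> C * H x" for x
  proof -
    have "\<bar>conv \<phi> f x\<bar> powr q = \<bar>conv \<phi> f x\<bar> powr (q - p) * \<bar>conv \<phi> f x\<bar> powr p"
      by (simp flip: powr_add)
    also have "\<dots> \<le> (mass powr (1/q) * N) powr (q - p) * (mass powr (1/q) * H x powr (1/p)) powr p"
      using abs_conv_le abs_conv_le_Holder assms exponent
      by (intro mult_mono powr_mono2) (auto simp: N_def H_def)
    also have "\<dots> = C * H x"
      using mass_nonneg conv_powr_nonneg exponent by (simp add: C_def H_def powr_mult powr_powr)
    finally show ?thesis .
  qed
  have "0 \<le> C" by (simp add: C_def)
  have integrable_CH: "integrable lborel (\<lambda>x. C * H x)"
    using integrable_conv_powr by (simp add: H_def)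
  have integrable: "integrable lborel (\<lambda>x. \<bar>conv \<phi> f x\<bar> powr q)"
  proof (rule Bochner_Integration.integrable_bound[OF integrable_CH])
    show "AE x in lborel. norm (\<bar>conv \<phi> f x\<bar> powr q) \<le> norm (C * H x)"
      using pointwise by (intro AE_I2) (simp add: order_trans[OF _ abs_ge_self])
  qed measurable
  have "(LINT x|lborel. \<bar>conv \<phi> f x\<bar> powr q) \<le> (LINT x|lborel. C * H x)"
    using integrable integrable_CH pointwise by (rule integral_mono)
  also have "\<dots> = C * (mass * N powr p)"
    by (simp add: H_def N_def integral_conv_powr Lp_norm_f_powr)
  also have "\<dots> = (mass powr (2/q) * N) powr q"
    unfolding C_def using \<open>1 < q\<close>
    by (intro powr_interpolation_identity[OF mass_nonneg \<open>0 \<le> N\<close>]) simp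
  finally have "Lp_norm q (conv \<phi> f) \<le> ((mass powr (2/q) * N) powr q) powr (1/q)"
    unfolding Lp_norm_def using \<open>1 < q\<close> by (intro powr_mono2) (auto intro: integral_nonneg_AE)
  also have "\<dots> = mass powr (2/q) * N"
    using mass_nonneg \<open>0 \<le> N\<close> \<open>1 < q\<close> by (simp add: powr_powr)
  finally show ?thesis
    using integrable by (simp add: in_Lp_def N_def)
qed

end

lemma Beta_diagonal_le:
  fixes b :: real
  assumes "1 \<le> b"
  shows "Beta b b \<le> (1/4) powr (b - 1)"
proof -
  have "((\<lambda>t. t powr (b - 1) * (1 - t) powr (b - 1)) has_integral Beta b b) {0..1}"
    using has_integral_Beta_real[of b b] assms by simp
  moreover have "((\<lambda>t. (1/4) powr (b - 1)) has_integral (1/4) powr (b - 1)) {0..1::real}"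
    using has_integral_const_real[of "(1/4::real) powr (b - 1)" 0 1] by (simp add: cbox_interval)
  moreover have "t powr (b - 1) * (1 - t) powr (b - 1) \<le> (1/4) powr (b - 1)" if "t \<in> {0..1}" for t :: real
  proof -
    have "0 \<le> (t - 1/2) * (t - 1/2)" by simp
    then have "t * (1 - t) \<le> 1/4" by (simp add: algebra_simps)
    then have "(t * (1 - t)) powr (b - 1) \<le> (1/4) powr (b - 1)"
      using that assms by (intro powr_mono2) auto
    then show ?thesis
      using that by (simp add: powr_mult)
  qed
  ultimately show ?thesis by (rule has_integral_le)
qed

lemma Gamma_ratio_eq_inverse_Beta:
  fixes b :: real
  assumes "0 < b"
  shows "Gamma (2 * b) / (Gamma (b + 1) * Gamma b) = 1 / (b * Beta b b)"
proof -
  have "b \<notin> \<int>\<^sub>\<le>\<^sub>0" using assms by (auto elim!: nonpos_Ints_cases)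
  then have "Gamma (b + 1) = b * Gamma b" by (rule Gamma_plus1)
  moreover have "0 < Gamma b" "0 < Gamma (2 * b)" using assms by simp_all
  ultimately show ?thesis by (simp add: Beta_def mult_2 field_simps)
qed

lemma ln_le_two_fifths_mult:
  fixes x :: real
  assumes "0 < x"
  shows "ln x \<le> 2/5 * x"
proof -
  have "5/2 \<le> exp (1::real)"
    using exp_lower_Taylor_quadratic[of 1] by simp
  have "ln (x / exp 1) \<le> x / exp 1 - 1"
    using assms by (intro ln_le_minus_one) simp
  then have "ln x \<le> x / exp 1"
    using assms by (simp add: ln_div)
  also have "\<dots> \<le> 2/5 * x"
    using assms \<open>5/2 \<le> exp 1\<close> by (simp add: field_simps)
  finally show ?thesis .
qed

lemma conjugate_exponent_ln_bound:
  fixes q :: real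
  assumes "2 < q"
  shows "2/5 \<le> (2 - 2/q) * ln (q/2) + ln 4 / q"
proof -
  have "4/3 \<le> ln (4::real)"
    using ln2_ge_two_thirds ln_mult[of 2 2] by simp
  show ?thesis
  proof (cases "q \<le> 3")
    case True
    then have "4/9 \<le> ln 4 / q"
      using \<open>4/3 \<le> ln 4\<close> assms by (simp add: field_simps)
    moreover have "0 \<le> (2 - 2/q) * ln (q/2)"
      using assms by (simp add: field_simps)
    ultimately show ?thesis by linarith
  next
    case False
    have "1/3 \<le> ln (3/2::real)"
      using ln_diff_le[of 1 "3/2"] by simp
    also have "\<dots> \<le> ln (q/2)"
      using False by simp
    finally have "4/3 * (1/3) \<le> (2 - 2/q) * ln (q/2)"
      using False by (intro mult_mono) (auto simp: field_simps)
    moreover have "0 \<le> ln 4 / q"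
      using assms by simp
    ultimately show ?thesis by linarith
  qed
qed

lemma four_powr_le_A_const:
  fixes p :: real
  assumes "1 < p" "p < 2"
  shows "4 powr (1 / conj_exp p) \<le> A_const p"
proof -
  define q where "q = conj_exp p"
  define b where "b = p / (2 - p)"
  have "2 < q" "1 < b"
    using assms by (simp_all add: q_def b_def conj_exp_def field_simps)
  have exponents: "2 * p / (2 - p) = 2 * b" "2 / (2 - p) = b + 1" "p / (2 - p) = b"
    "2 / p - 1 = 1 / b" "2 / p = 2 - 2 / q" "(b - 1) / b = 2 / q"
    using assms by (simp_all add: b_def q_def conj_exp_def field_simps)
  define B where "B = Beta b b"
  have "0 < B"
    using \<open>1 < b\<close> by (simp add: B_def Beta_def)
  have A_eq: "A_const p = (q/2) powr (2/p) * (1 / (b * B)) powr (1/b)"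
    using Gamma_ratio_eq_inverse_Beta[of b] \<open>1 < b\<close>
    by (simp add: A_const_def exponents(1-4) B_def flip: q_def)
  have "B \<le> (1/4) powr (b - 1)"
    using Beta_diagonal_le[of b] \<open>1 < b\<close> by (simp add: B_def)
  then have "ln B \<le> ln ((1/4) powr (b - 1))"
    using \<open>0 < B\<close> by (subst ln_le_cancel_iff) auto
  also have "\<dots> = (b - 1) * ln (1/4)"
    by (simp add: ln_powr)
  finally have "ln B \<le> (b - 1) * ln (1/4)" .
  then have "(b - 1) * ln 4 / b \<le> - ln B / b"
    using \<open>1 < b\<close> by (intro divide_right_mono) (auto simp: ln_div)
  then have "2/q * ln 4 \<le> - ln B / b"
    by (simp flip: exponents(6))
  moreover have "ln b / b \<le> 2/5"
    using ln_le_two_fifths_mult[of b] \<open>1 < b\<close> by (simp add: divide_le_eq)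
  moreover have "2/5 \<le> (2 - 2/q) * ln (q/2) + ln 4 / q"
    using \<open>2 < q\<close> by (rule conjugate_exponent_ln_bound)
  moreover have "ln (A_const p) = (2 - 2/q) * ln (q/2) - ln b / b - ln B / b"
    using \<open>2 < q\<close> \<open>1 < b\<close> \<open>0 < B\<close>
    by (simp add: A_eq ln_mult ln_powr ln_div exponents(5) field_simps)
  ultimately have "ln (4 powr (1/q)) \<le> ln (A_const p)"
    by (simp add: ln_powr)
  moreover have "0 < A_const p"
    using \<open>2 < q\<close> \<open>1 < b\<close> \<open>0 < B\<close> by (simp add: A_eq)
  ultimately show ?thesis
    by (subst (asm) ln_le_cancel_iff) (auto simp: q_def)
qed

theorem theorem3:
  fixes p :: real and f :: "real \<Rightarrow> real"
  assumes "1 < p" and "p < 2" and "in_Lp p f"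
  shows "in_Lp (conj_exp p) (conv (\<lambda>x. exp (- \<bar>x\<bar>)) f)
     \<and> Lp_norm (conj_exp p) (conv (\<lambda>x. exp (- \<bar>x\<bar>)) f) \<le> A_const p * Lp_norm p f"
proof -
  let ?q = "conj_exp p"
  have "1/p + 1/?q = 1" "p \<le> ?q" "0 < ?q"
    using assms by (simp_all add: conj_exp_def field_simps)
  interpret unit_kernel_Lp "\<lambda>x. exp (- \<bar>x\<bar>)" f p ?q
    using assms \<open>1/p + 1/?q = 1\<close> integrable_exp_neg_abs by unfold_locales auto
  have "mass powr (2/?q) \<le> 2 powr (2/?q)"
    using integral_exp_neg_abs_le mass_nonneg \<open>0 < ?q\<close> by (intro powr_mono2) auto
  also have "\<dots> = 4 powr (1/?q)"
    using powr_powr[of 2 2 "1/?q"] by simp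
  also have "\<dots> \<le> A_const p"
    using assms(1,2) by (rule four_powr_le_A_const)
  finally have "mass powr (2/?q) * Lp_norm p f \<le> A_const p * Lp_norm p f"
    by (intro mult_right_mono) (simp_all add: Lp_norm_def)
  with Lp_norm_conv_le[OF \<open>p \<le> ?q\<close>] show ?thesis
    by simp
qed

end
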